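(* Let $\gamma>0$. For a multiset $S=\{G_1,\dots,G_N\}$ of $N\ge 2$ elements equipped with a nonnegative symmetric distance $D$, define the Energy diversity $$\mathrm{div}(S) = -\frac{1}{N(N-1)}\sum_{i\neq j}\frac{1}{D(G_i,G_j)^{\gamma}},$$ with the convention $1/0=+\infty$ (so $\mathrm{div}(S)=-\infty$ whenever two elements are at distance $0$). Then Energy satisfies both the monotonicity property and the uniqueness property.
   Context: Monotonicity: whenever $S,S'$ are multisets each consisting of $N$ distinct elements and $g:S\to S'$ is a bijection with $D(G_i,G_j)\le D(g(G_i),g(G_j))$ for all $G_i,G_j\in S$, with strict inequality for at least one pair, then $\mathrm{div}(S)<\mathrm{div}(S')$. Uniqueness: whenever $S$ consists of $N$ distinct elements $G_1,\dots,G_N$ and $S_{ij}=(S\setminus\{G_i\})\cup\{G_j\}$ for $j\neq i$ (i.e. $G_i$ is removed and a second copy of $G_j$ is added), then $\mathrm{div}(S)>\mathrm{div}(S_{ij})$. Here distinct elements are assumed to be at positive distance from each other. *)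

theory Defs
  imports Complex_Main "HOL-Library.Multiset" "HOL-Library.Extended_Real"
begin

definition energy_term :: "real \<Rightarrow> ('a \<Rightarrow> 'a \<Rightarrow> real) \<Rightarrow> 'a \<Rightarrow> 'a \<Rightarrow> ereal" where
  "energy_term \<gamma> D x y = (if D x y = 0 then \<infinity> else ereal (1 / (D x y powr \<gamma>)))"

text \<open>Energy diversity of a multiset S of N elements:
  -1/(N(N-1)) * sum over ordered pairs of distinct positions i \<noteq> j.\<close>
definition energy_div :: "real \<Rightarrow> ('a \<Rightarrow> 'a \<Rightarrow> real) \<Rightarrow> 'a multiset \<Rightarrow> ereal" where
  "energy_div \<gamma> D S =
     - (ereal (1 / (real (size S) * (real (size S) - 1))) *
        (\<Sum>\<^sub># (image_mset (\<lambda>x. \<Sum>\<^sub># (image_mset (\<lambda>y. energy_term \<gamma> D x y) (S - {#x#}))) S)))"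

text \<open>Monotonicity property (multisets of N distinct elements = finite sets of card N).\<close>
definition monotonicity_prop :: "('a multiset \<Rightarrow> ereal) \<Rightarrow> ('a \<Rightarrow> 'a \<Rightarrow> real) \<Rightarrow> nat \<Rightarrow> bool" where
  "monotonicity_prop dv D N \<longleftrightarrow>
    (\<forall>S S' g. finite S \<and> finite S' \<and> card S = N \<and> card S' = N \<and>
       (\<forall>x\<in>S. \<forall>y\<in>S. x \<noteq> y \<longrightarrow> D x y > 0) \<and>
       (\<forall>x\<in>S'. \<forall>y\<in>S'. x \<noteq> y \<longrightarrow> D x y > 0) \<and>
       bij_betw g S S' \<and>
       (\<forall>x\<in>S. \<forall>y\<in>S. D x y \<le> D (g x) (g y)) \<and>
       (\<exists>x\<in>S. \<exists>y\<in>S. D x y < D (g x) (g y))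
     \<longrightarrow> dv (mset_set S) < dv (mset_set S'))"

definition uniqueness_prop :: "('a multiset \<Rightarrow> ereal) \<Rightarrow> ('a \<Rightarrow> 'a \<Rightarrow> real) \<Rightarrow> nat \<Rightarrow> bool" where
  "uniqueness_prop dv D N \<longleftrightarrow>
    (\<forall>S. finite S \<and> card S = N \<and>
       (\<forall>x\<in>S. \<forall>y\<in>S. x \<noteq> y \<longrightarrow> D x y > 0) \<longrightarrow>
       (\<forall>Gi\<in>S. \<forall>Gj\<in>S. Gi \<noteq> Gj \<longrightarrow>
          dv (mset_set (S - {Gi}) + {#Gj#}) < dv (mset_set S)))"

end

theory Submission
  imports Defs
begin

text \<open>On a set of points at pairwise positive distance every pair term is finite, so the
  diversity is -1/(N(N-1)) times the real pair energy. A bijection that moves no pair closer and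
  some pair strictly apart decreases every term 1/D^\<gamma> weakly and one of them strictly, hence
  increases the diversity. Duplicating a point creates a pair at distance 0, whose term is
  +\<infinity>, so the diversity drops to -\<infinity>.\<close>

definition pair_energy :: "real \<Rightarrow> ('a \<Rightarrow> 'a \<Rightarrow> real) \<Rightarrow> 'a set \<Rightarrow> real" where
  "pair_energy \<gamma> D S = (\<Sum>(x, y)\<in>Sigma S (\<lambda>x. S - {x}). 1 / D x y powr \<gamma>)"

lemma energy_div_mset_set:
  assumes "finite S" and pos: "\<forall>x\<in>S. \<forall>y\<in>S. x \<noteq> y \<longrightarrow> D x y > 0"
  shows "energy_div \<gamma> D (mset_set S) =
    ereal (- (1 / (real (card S) * (real (card S) - 1))) * pair_energy \<gamma> D S)"
proof -
  have inner: "\<Sum>\<^sub># (image_mset (energy_term \<gamma> D x) (mset_set S - {#x#}))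
      = ereal (\<Sum>y\<in>S - {x}. 1 / D x y powr \<gamma>)" if "x \<in> S" for x
  proof -
    have "mset_set S - {#x#} = mset_set (S - {x})"
      using mset_set_Diff[of S "{x}"] \<open>finite S\<close> that by simp
    then have "\<Sum>\<^sub># (image_mset (energy_term \<gamma> D x) (mset_set S - {#x#}))
       = (\<Sum>y\<in>S - {x}. energy_term \<gamma> D x y)" by (simp add: sum_unfold_sum_mset)
    also have "\<dots> = (\<Sum>y\<in>S - {x}. ereal (1 / D x y powr \<gamma>))"
      using pos that by (intro sum.cong) (fastforce simp: energy_term_def)+
    finally show ?thesis by (simp add: sum_ereal)
  qed
  have "\<Sum>\<^sub># (image_mset (\<lambda>x. \<Sum>\<^sub># (image_mset (energy_term \<gamma> D x) (mset_set S - {#x#})))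
      (mset_set S)) = (\<Sum>x\<in>S. \<Sum>\<^sub># (image_mset (energy_term \<gamma> D x) (mset_set S - {#x#})))"
    by (simp only: sum_unfold_sum_mset)
  also have "\<dots> = (\<Sum>x\<in>S. ereal (\<Sum>y\<in>S - {x}. 1 / D x y powr \<gamma>))"
    using inner by (rule sum.cong[OF refl])
  also have "\<dots> = ereal (pair_energy \<gamma> D S)"
    using \<open>finite S\<close> by (simp add: pair_energy_def sum.Sigma)
  finally show ?thesis
    unfolding energy_div_def using \<open>finite S\<close> by simp
qed

lemma bij_betw_map_prod_off_diagonal:
  assumes "bij_betw g S S'"
  shows "bij_betw (map_prod g g) (Sigma S (\<lambda>x. S - {x})) (Sigma S' (\<lambda>x. S' - {x}))"
proof -
  have "inj_on g S" and "g ` S = S'"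
    using assms by (auto simp: bij_betw_def)
  have "map_prod g g ` Sigma S (\<lambda>x. S - {x}) = Sigma S' (\<lambda>x. S' - {x})"
    using \<open>inj_on g S\<close> \<open>g ` S = S'\<close> by (auto simp: inj_on_eq_iff)
  moreover have "inj_on (map_prod g g) (Sigma S (\<lambda>x. S - {x}))"
    using map_prod_inj_on[OF \<open>inj_on g S\<close> \<open>inj_on g S\<close>] by (rule inj_on_subset) auto
  ultimately show ?thesis by (simp add: bij_betw_def)
qed

lemma one_over_powr_antimono:
  fixes a b \<gamma> :: real
  assumes "0 < a" "a \<le> b" "0 \<le> \<gamma>"
  shows "1 / b powr \<gamma> \<le> 1 / a powr \<gamma>"
  using assms by (intro divide_left_mono powr_mono2) auto

lemma one_over_powr_strict_antimono:
  fixes a b \<gamma> :: real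
  assumes "0 < a" "a < b" "0 < \<gamma>"
  shows "1 / b powr \<gamma> < 1 / a powr \<gamma>"
  using assms by (intro divide_strict_left_mono powr_less_mono2) auto

lemma pair_energy_strict_antimono:
  assumes "\<gamma> > 0" and "finite S" and "bij_betw g S S'"
    and pos: "\<forall>x\<in>S. \<forall>y\<in>S. x \<noteq> y \<longrightarrow> D x y > 0"
    and le: "\<forall>x\<in>S. \<forall>y\<in>S. D x y \<le> D (g x) (g y)"
    and lt: "\<exists>x\<in>S. \<exists>y\<in>S. x \<noteq> y \<and> D x y < D (g x) (g y)"
  shows "pair_energy \<gamma> D S' < pair_energy \<gamma> D S"
proof -
  let ?P = "Sigma S (\<lambda>x. S - {x})"
  let ?f = "\<lambda>(x, y). 1 / D x y powr \<gamma>"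
  have "pair_energy \<gamma> D S' = sum (?f \<circ> map_prod g g) ?P"
    unfolding pair_energy_def comp_def
    by (rule sum.reindex_bij_betw[symmetric, OF bij_betw_map_prod_off_diagonal[OF \<open>bij_betw g S S'\<close>]])
  also have "\<dots> < sum ?f ?P"
  proof (rule sum_strict_mono_ex1)
    show "finite ?P" using \<open>finite S\<close> by simp
    show "\<forall>p\<in>?P. (?f \<circ> map_prod g g) p \<le> ?f p"
    proof
      fix p assume "p \<in> ?P"
      then obtain x y where "p = (x, y)" "x \<in> S" "y \<in> S" "x \<noteq> y" by auto
      with pos le \<open>\<gamma> > 0\<close> show "(?f \<circ> map_prod g g) p \<le> ?f p"
        by (simp add: one_over_powr_antimono)
    qed
    from lt obtain x y where "x \<in> S" "y \<in> S" "x \<noteq> y" "D x y < D (g x) (g y)" by blast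
    with pos \<open>\<gamma> > 0\<close> have "(?f \<circ> map_prod g g) (x, y) < ?f (x, y)"
      by (simp add: one_over_powr_strict_antimono)
    then show "\<exists>p\<in>?P. (?f \<circ> map_prod g g) p < ?f p"
      using \<open>x \<in> S\<close> \<open>y \<in> S\<close> \<open>x \<noteq> y\<close> by blast
  qed
  finally show ?thesis by (simp add: pair_energy_def)
qed

lemma sum_mset_image_PInf:
  fixes f :: "'a \<Rightarrow> ereal"
  assumes "x \<in># M" and "f x = \<infinity>"
  shows "\<Sum>\<^sub># (image_mset f M) = \<infinity>"
proof -
  obtain M' where "M = add_mset x M'" using mset_add[OF assms(1)] .
  then show ?thesis using assms(2) by simp
qed

lemma energy_div_repeated:
  assumes "D x x = 0" and "count M x \<ge> 2"
  shows "energy_div \<gamma> D M = - \<infinity>"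
proof -
  have "size M \<ge> 2" using assms(2) count_le_size[of M x] by linarith
  have "x \<in># M - {#x#}" using assms(2) by (simp add: in_diff_count)
  moreover have "energy_term \<gamma> D x x = \<infinity>"
    using assms(1) by (simp add: energy_term_def)
  ultimately have inner_PInf: "\<Sum>\<^sub># (image_mset (energy_term \<gamma> D x) (M - {#x#})) = \<infinity>"
    by (rule sum_mset_image_PInf)
  have "x \<in># M" using assms(2) by (intro count_inI) linarith
  then have "\<Sum>\<^sub># (image_mset (\<lambda>x. \<Sum>\<^sub># (image_mset (energy_term \<gamma> D x) (M - {#x#}))) M)
      = \<infinity>"
    using inner_PInf by (rule sum_mset_image_PInf)
  then show ?thesis
    unfolding energy_div_def using \<open>size M \<ge> 2\<close> \<open>x \<in># M\<close> by auto
qed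

theorem proposition1:
  fixes \<gamma> :: real and D :: "'a \<Rightarrow> 'a \<Rightarrow> real" and N :: nat
  assumes "\<gamma> > 0"
    and "\<And>x y. D x y \<ge> 0"
    and "\<And>x y. D x y = D y x"
    and "\<And>x. D x x = 0"
    and "N \<ge> 2"
  shows "monotonicity_prop (energy_div \<gamma> D) D N \<and> uniqueness_prop (energy_div \<gamma> D) D N"
proof
  have N_factor_pos: "real N * (real N - 1) > 0" using assms(5) by simp
  show "monotonicity_prop (energy_div \<gamma> D) D N"
    unfolding monotonicity_prop_def
  proof (intro allI impI, elim conjE)
    fix S S' :: "'a set" and g
    assume "finite S" "finite S'" "card S = N" "card S' = N"
      and pos: "\<forall>x\<in>S. \<forall>y\<in>S. x \<noteq> y \<longrightarrow> D x y > 0"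
      and pos': "\<forall>x\<in>S'. \<forall>y\<in>S'. x \<noteq> y \<longrightarrow> D x y > 0"
      and "bij_betw g S S'" and le: "\<forall>x\<in>S. \<forall>y\<in>S. D x y \<le> D (g x) (g y)"
      and "\<exists>x\<in>S. \<exists>y\<in>S. D x y < D (g x) (g y)"
    then have "\<exists>x\<in>S. \<exists>y\<in>S. x \<noteq> y \<and> D x y < D (g x) (g y)"
      using assms(4) by (metis less_irrefl)
    with pair_energy_strict_antimono[OF assms(1) \<open>finite S\<close> \<open>bij_betw g S S'\<close> pos le]
    have "pair_energy \<gamma> D S' < pair_energy \<gamma> D S" .
    then show "energy_div \<gamma> D (mset_set S) < energy_div \<gamma> D (mset_set S')"
      using \<open>finite S\<close> \<open>finite S'\<close> \<open>card S = N\<close> \<open>card S' = N\<close> pos pos' N_factor_pos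
      by (simp add: energy_div_mset_set divide_strict_right_mono)
  qed
  show "uniqueness_prop (energy_div \<gamma> D) D N"
    unfolding uniqueness_prop_def
  proof (intro allI impI ballI, elim conjE)
    fix S :: "'a set" and Gi Gj
    assume "finite S" and pos: "\<forall>x\<in>S. \<forall>y\<in>S. x \<noteq> y \<longrightarrow> D x y > 0"
      and "Gj \<in> S" "Gi \<noteq> Gj"
    then have "count (mset_set (S - {Gi}) + {#Gj#}) Gj \<ge> 2" by simp
    then have "energy_div \<gamma> D (mset_set (S - {Gi}) + {#Gj#}) = - \<infinity>"
      by (rule energy_div_repeated[of D Gj, OF assms(4)])
    then show "energy_div \<gamma> D (mset_set (S - {Gi}) + {#Gj#}) < energy_div \<gamma> D (mset_set S)"
      using \<open>finite S\<close> pos by (simp add: energy_div_mset_set)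
  qed
qed

end
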